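(* Let $(G,M,\Delta)$ be a Garside structure, $(H,N,\delta)$ a parabolic substructure, and $T$ the set of $(H,N)$-reduced elements of $G$. Let $c\in T\cap M$ and $\beta\in H$, and let $\beta=b_2^{-1}b_1$ be the left orthogonal form of $\beta$. Then $b_2\wedge_L(b_1c)=1$, and therefore $b_2^{-1}(b_1c)$ is the left orthogonal form of $\beta c$.
   Context: Let $G$ be a group and $M$ a submonoid with $M\cap M^{-1}=\{1\}$. Define $\alpha\le_L\beta$ iff $\alpha^{-1}\beta\in M$, and $\alpha\le_R\beta$ iff $\beta\alpha^{-1}\in M$. For $a\in M$ let $\mathrm{Div}_L(a)=\{b\in M: b\le_L a\}$, $\mathrm{Div}_R(a)=\{b\in M: b\le_R a\}$; $a$ is balanced if these coincide, and then $\mathrm{Div}(a)$ denotes this set. $M$ is Noetherian if each $a\in M$ admits an $n$ such that $a$ is not a product of more than $n$ non-trivial factors. A Garside structure $(G,M,\Delta)$: $\Delta\in M$ balanced, $M$ Noetherian, $\mathrm{Div}(\Delta)$ finite and generating $M$ as a monoid and $G$ as a group, $(G,\le_L)$ a lattice with meet $\wedge_L$. A parabolic substructure $(H,N,\delta)$: $\delta\in M$ balanced, $H$ (resp. $N$) the subgroup (resp. submonoid) generated by $\mathrm{Div}(\delta)$, and $\mathrm{Div}(\delta)=\mathrm{Div}(\Delta)\cap N$; it is assumed $H\ne\{1\}$. Put $\omega=\delta^{-1}\Delta$. $a\in M$ is unmovable if $\Delta\not\le_L a$; every $\alpha\in G$ has a unique right $\Delta$-form $\alpha=a\Delta^p$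 ($a\in M$ unmovable, $p\in\mathbb Z$). $a\in M$ is $N$-reduced if $a\wedge_L\delta=1$. $\alpha$ with right $\Delta$-form $a\Delta^p$ is $(H,N)$-reduced if $a$ is $N$-reduced and either $p=0$, or $p<0$ and $\omega\not\le_L a$. Every $\alpha\in G$ can be written uniquely as $\alpha=b^{-1}a$ with $a,b\in M$ and $a\wedge_L b=1$; this is its left orthogonal form. *)

theory Defs
  imports "HOL-Algebra.Algebra"
begin

definition leL :: "('a, 'b) monoid_scheme \<Rightarrow> 'a set \<Rightarrow> 'a \<Rightarrow> 'a \<Rightarrow> bool" where
  "leL G M x y \<longleftrightarrow> inv\<^bsub>G\<^esub> x \<otimes>\<^bsub>G\<^esub> y \<in> M"

definition leR :: "('a, 'b) monoid_scheme \<Rightarrow> 'a set \<Rightarrow> 'a \<Rightarrow> 'a \<Rightarrow> bool" where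
  "leR G M x y \<longleftrightarrow> y \<otimes>\<^bsub>G\<^esub> inv\<^bsub>G\<^esub> x \<in> M"

definition DivL :: "('a, 'b) monoid_scheme \<Rightarrow> 'a set \<Rightarrow> 'a \<Rightarrow> 'a set" where
  "DivL G M a = {b \<in> M. leL G M b a}"

definition DivR :: "('a, 'b) monoid_scheme \<Rightarrow> 'a set \<Rightarrow> 'a \<Rightarrow> 'a set" where
  "DivR G M a = {b \<in> M. leR G M b a}"

definition balanced :: "('a, 'b) monoid_scheme \<Rightarrow> 'a set \<Rightarrow> 'a \<Rightarrow> bool" where
  "balanced G M a \<longleftrightarrow> a \<in> M \<and> DivL G M a = DivR G M a"

text \<open>Div(a), used for balanced a.\<close>
abbreviation Div :: "('a, 'b) monoid_scheme \<Rightarrow> 'a set \<Rightarrow> 'a \<Rightarrow> 'a set" where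
  "Div G M a \<equiv> DivL G M a"

definition noetherian :: "('a, 'b) monoid_scheme \<Rightarrow> 'a set \<Rightarrow> bool" where
  "noetherian G M \<longleftrightarrow> (\<forall>a\<in>M. \<exists>n::nat. \<forall>xs.
      set xs \<subseteq> M - {\<one>\<^bsub>G\<^esub>} \<and> foldr (\<lambda>x y. x \<otimes>\<^bsub>G\<^esub> y) xs \<one>\<^bsub>G\<^esub> = a \<longrightarrow> length xs \<le> n)"

inductive_set mon_gen :: "('a, 'b) monoid_scheme \<Rightarrow> 'a set \<Rightarrow> 'a set"
  for G and S where
    one: "\<one>\<^bsub>G\<^esub> \<in> mon_gen G S"
  | incl: "s \<in> S \<Longrightarrow> s \<in> mon_gen G S"
  | mult: "x \<in> mon_gen G S \<Longrightarrow> y \<in> mon_gen G S \<Longrightarrow> x \<otimes>\<^bsub>G\<^esub> y \<in> mon_gen G S"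

definition leL_lattice :: "('a, 'b) monoid_scheme \<Rightarrow> 'a set \<Rightarrow> bool" where
  "leL_lattice G M \<longleftrightarrow> (\<forall>x\<in>carrier G. \<forall>y\<in>carrier G.
     (\<exists>m\<in>carrier G. leL G M m x \<and> leL G M m y \<and>
        (\<forall>d\<in>carrier G. leL G M d x \<and> leL G M d y \<longrightarrow> leL G M d m)) \<and>
     (\<exists>j\<in>carrier G. leL G M x j \<and> leL G M y j \<and>
        (\<forall>u\<in>carrier G. leL G M x u \<and> leL G M y u \<longrightarrow> leL G M j u)))"

definition meetL :: "('a, 'b) monoid_scheme \<Rightarrow> 'a set \<Rightarrow> 'a \<Rightarrow> 'a \<Rightarrow> 'a" where
  "meetL G M x y = (THE m. m \<in> carrier G \<and> leL G M m x \<and> leL G M m y \<and>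
        (\<forall>d\<in>carrier G. leL G M d x \<and> leL G M d y \<longrightarrow> leL G M d m))"

definition garside_structure :: "('a, 'b) monoid_scheme \<Rightarrow> 'a set \<Rightarrow> 'a \<Rightarrow> bool" where
  "garside_structure G M \<Delta> \<longleftrightarrow>
     group G \<and> submonoid M G \<and> {x \<in> M. inv\<^bsub>G\<^esub> x \<in> M} = {\<one>\<^bsub>G\<^esub>} \<and>
     balanced G M \<Delta> \<and> noetherian G M \<and> finite (Div G M \<Delta>) \<and>
     mon_gen G (Div G M \<Delta>) = M \<and> generate G (Div G M \<Delta>) = carrier G \<and>
     leL_lattice G M"

definition parabolic_substructure ::
  "('a, 'b) monoid_scheme \<Rightarrow> 'a set \<Rightarrow> 'a \<Rightarrow> 'a set \<Rightarrow> 'a set \<Rightarrow> 'a \<Rightarrow> bool" where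
  "parabolic_substructure G M \<Delta> H N \<delta> \<longleftrightarrow>
     balanced G M \<delta> \<and> H = generate G (Div G M \<delta>) \<and> N = mon_gen G (Div G M \<delta>) \<and>
     Div G M \<delta> = Div G M \<Delta> \<inter> N \<and> H \<noteq> {\<one>\<^bsub>G\<^esub>}"

definition unmovable :: "('a, 'b) monoid_scheme \<Rightarrow> 'a set \<Rightarrow> 'a \<Rightarrow> 'a \<Rightarrow> bool" where
  "unmovable G M \<Delta> a \<longleftrightarrow> a \<in> M \<and> \<not> leL G M \<Delta> a"

definition right_delta_form :: "('a, 'b) monoid_scheme \<Rightarrow> 'a set \<Rightarrow> 'a \<Rightarrow> 'a \<Rightarrow> 'a \<Rightarrow> int \<Rightarrow> bool" where
  "right_delta_form G M \<Delta> \<alpha> a p \<longleftrightarrow> unmovable G M \<Delta> a \<and> \<alpha> = a \<otimes>\<^bsub>G\<^esub> (\<Delta> [^]\<^bsub>G\<^esub> p)"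

definition N_reduced :: "('a, 'b) monoid_scheme \<Rightarrow> 'a set \<Rightarrow> 'a \<Rightarrow> 'a \<Rightarrow> bool" where
  "N_reduced G M \<delta> a \<longleftrightarrow> a \<in> M \<and> meetL G M a \<delta> = \<one>\<^bsub>G\<^esub>"

text \<open>The set T of (H,N)-reduced elements; omega = delta^{-1} Delta.\<close>
definition HN_reduced_set :: "('a, 'b) monoid_scheme \<Rightarrow> 'a set \<Rightarrow> 'a \<Rightarrow> 'a \<Rightarrow> 'a set" where
  "HN_reduced_set G M \<Delta> \<delta> = {\<alpha> \<in> carrier G. \<exists>a p. right_delta_form G M \<Delta> \<alpha> a p \<and>
      N_reduced G M \<delta> a \<and>
      (p = 0 \<or> (p < 0 \<and> \<not> leL G M (inv\<^bsub>G\<^esub> \<delta> \<otimes>\<^bsub>G\<^esub> \<Delta>) a))}"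

definition left_orth_form :: "('a, 'b) monoid_scheme \<Rightarrow> 'a set \<Rightarrow> 'a \<Rightarrow> 'a \<Rightarrow> 'a \<Rightarrow> bool" where
  "left_orth_form G M \<alpha> b a \<longleftrightarrow> a \<in> M \<and> b \<in> M \<and> \<alpha> = inv\<^bsub>G\<^esub> b \<otimes>\<^bsub>G\<^esub> a \<and>
     meetL G M a b = \<one>\<^bsub>G\<^esub>"

end

theory Submission
  imports Defs
begin

text \<open>
  Elements of the parabolic subgroup \<open>H\<close> are fractions \<open>x\<inverse> y\<close> with \<open>x, y \<in> N\<close>. If
  \<open>\<beta> = b2\<inverse> b1\<close> is orthogonal, then \<open>g = x b2\<inverse>\<close> satisfies \<open>g b2 = x\<close>, \<open>g b1 = y\<close>, so by left
  invariance of the meet \<open>g = x \<and> y\<close> lies in \<open>M\<close> below a power of \<open>\<delta>\<close>. Every element of \<open>M\<close>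
  below a power of \<open>\<delta>\<close> lies in \<open>N\<close> (Noetherian induction over atoms: an atom of \<open>\<Delta>\<close> below
  \<open>\<delta>\<^sup>k\<close> is below \<open>\<delta>\<close>), and \<open>N\<close> is closed under left cancellation, so \<open>b1, b2 \<in> N\<close>.
  An \<open>(H,N)\<close>-reduced element \<open>c\<close> of \<open>M\<close> has \<open>\<Delta>\<close>-exponent \<open>0\<close>, hence \<open>c \<and> \<delta> = 1\<close>. If
  \<open>b2 \<and> b1 c \<noteq> 1\<close>, this meet lies in \<open>N\<close> and so is above an atom \<open>s \<noteq> 1\<close> of \<open>\<delta>\<close>; since
  also \<open>\<delta> \<le> b1 \<delta>\<close>, we get \<open>s \<le> b1 c \<and> b1 \<delta> = b1 (c \<and> \<delta>) = b1\<close> and \<open>s \<le> b2\<close>,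
  contradicting \<open>b1 \<and> b2 = 1\<close>.
\<close>

lemma (in group) inv_mult_cancel_left [simp]:
  "x \<in> carrier G \<Longrightarrow> y \<in> carrier G \<Longrightarrow> inv x \<otimes> (x \<otimes> y) = y"
  by (simp add: m_assoc[symmetric])

lemma (in group) mult_inv_cancel_left [simp]:
  "x \<in> carrier G \<Longrightarrow> y \<in> carrier G \<Longrightarrow> x \<otimes> (inv x \<otimes> y) = y"
  by (simp add: m_assoc[symmetric])

lemma (in group) conj_pow_closed:
  assumes "S \<subseteq> carrier G" "a \<in> carrier G" "\<And>x. x \<in> S \<Longrightarrow> inv a \<otimes> x \<otimes> a \<in> S"
    and "x \<in> S"
  shows "inv (a [^] (k::nat)) \<otimes> x \<otimes> a [^] k \<in> S"
proof (induction k)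
  case 0
  then show ?case using assms by auto
next
  case (Suc k)
  have "inv (a [^] Suc k) \<otimes> x \<otimes> a [^] Suc k = inv a \<otimes> (inv (a [^] k) \<otimes> x \<otimes> a [^] k) \<otimes> a"
    using assms by (auto simp: m_assoc inv_mult_group)
  then show ?case using Suc assms(3) by simp
qed

locale pointed_order = group G for G (structure) +
  fixes M :: "'a set"
  assumes M_submonoid: "submonoid M G"
    and M_pointed: "x \<in> M \<Longrightarrow> inv x \<in> M \<Longrightarrow> x = \<one>"
begin

abbreviation leL_M :: "'a \<Rightarrow> 'a \<Rightarrow> bool" (infix "\<preceq>" 50) where
  "x \<preceq> y \<equiv> leL G M x y"

lemma M_carrier: "x \<in> M \<Longrightarrow> x \<in> carrier G"
  using submonoid.subset[OF M_submonoid] by blast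

lemma one_in_M [simp]: "\<one> \<in> M"
  using submonoid.one_closed[OF M_submonoid] .

lemma M_mult_closed: "x \<in> M \<Longrightarrow> y \<in> M \<Longrightarrow> x \<otimes> y \<in> M"
  using submonoid.m_closed[OF M_submonoid] .

lemma leL_refl: "x \<in> carrier G \<Longrightarrow> x \<preceq> x"
  by (simp add: leL_def)

lemma leL_trans:
  assumes "x \<in> carrier G" "y \<in> carrier G" "z \<in> carrier G" "x \<preceq> y" "y \<preceq> z"
  shows "x \<preceq> z"
proof -
  have "inv x \<otimes> z = (inv x \<otimes> y) \<otimes> (inv y \<otimes> z)"
    using assms by (simp add: m_assoc)
  then show ?thesis using assms M_mult_closed by (simp add: leL_def)
qed

lemma leL_antisym:
  assumes "x \<in> carrier G" "y \<in> carrier G" "x \<preceq> y" "y \<preceq> x"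
  shows "x = y"
proof -
  have "inv (inv x \<otimes> y) = inv y \<otimes> x"
    using assms by (simp add: inv_mult_group)
  then have "inv x \<otimes> y = \<one>"
    using assms M_pointed by (simp add: leL_def)
  then show ?thesis
    using assms by (metis inv_equality inv_inv l_inv_ex)
qed

lemma leL_mult_left_cancel:
  assumes "g \<in> carrier G" "x \<in> carrier G" "y \<in> carrier G"
  shows "g \<otimes> x \<preceq> g \<otimes> y \<longleftrightarrow> x \<preceq> y"
proof -
  have "inv (g \<otimes> x) \<otimes> (g \<otimes> y) = inv x \<otimes> y"
    using assms by (simp add: inv_mult_group m_assoc)
  then show ?thesis by (simp add: leL_def)
qed

lemma one_leL_iff: "x \<in> carrier G \<Longrightarrow> \<one> \<preceq> x \<longleftrightarrow> x \<in> M"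
  by (simp add: leL_def)

lemma leL_one_imp_eq: "x \<in> M \<Longrightarrow> x \<preceq> \<one> \<Longrightarrow> x = \<one>"
  using M_pointed M_carrier by (simp add: leL_def)

lemma leL_mult_right: "x \<in> carrier G \<Longrightarrow> y \<in> M \<Longrightarrow> x \<preceq> x \<otimes> y"
  using M_carrier by (simp add: leL_def m_assoc[symmetric])

lemma mon_gen_subset: "S \<subseteq> M \<Longrightarrow> mon_gen G S \<subseteq> M"
proof
  fix x assume "S \<subseteq> M" "x \<in> mon_gen G S"
  from this(2) show "x \<in> M"
    by (induction rule: mon_gen.induct) (use \<open>S \<subseteq> M\<close> in \<open>auto simp: M_mult_closed\<close>)
qed

lemma mon_gen_conj_closed:
  assumes "S \<subseteq> M" "a \<in> carrier G" "\<And>s. s \<in> S \<Longrightarrow> inv a \<otimes> s \<otimes> a \<in> mon_gen G S"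
    and "x \<in> mon_gen G S"
  shows "inv a \<otimes> x \<otimes> a \<in> mon_gen G S"
  using assms(4)
proof (induction rule: mon_gen.induct)
  case one
  then show ?case using assms(2) by (simp add: mon_gen.one)
next
  case (incl s)
  then show ?case using assms(3) by simp
next
  case (mult x y)
  have "x \<in> carrier G" "y \<in> carrier G"
    using mult.hyps mon_gen_subset[OF assms(1)] M_carrier by auto
  then have "inv a \<otimes> (x \<otimes> y) \<otimes> a = (inv a \<otimes> x \<otimes> a) \<otimes> (inv a \<otimes> y \<otimes> a)"
    using assms(2) by (simp add: m_assoc)
  then show ?case using mult.IH by (simp add: mon_gen.mult)
qed

lemma mon_gen_generator_leL:
  assumes "S \<subseteq> M" "x \<in> mon_gen G S" "x \<noteq> \<one>"
  shows "\<exists>s\<in>S. s \<noteq> \<one> \<and> s \<preceq> x"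
  using assms(2,3)
proof (induction rule: mon_gen.induct)
  case one
  then show ?case by simp
next
  case (incl s)
  then show ?case using assms(1) M_carrier leL_refl by blast
next
  case (mult x y)
  have "x \<in> M" "y \<in> M"
    using mult.hyps mon_gen_subset[OF assms(1)] by auto
  show ?case
  proof (cases "x = \<one>")
    case True
    then show ?thesis using mult \<open>y \<in> M\<close> M_carrier by simp
  next
    case False
    then obtain s where "s \<in> S" "s \<noteq> \<one>" "s \<preceq> x"
      using mult.IH by blast
    moreover have "x \<preceq> x \<otimes> y"
      using leL_mult_right \<open>x \<in> M\<close> \<open>y \<in> M\<close> M_carrier by simp
    ultimately show ?thesis
      using leL_trans[of s x "x \<otimes> y"] assms(1) \<open>x \<in> M\<close> \<open>y \<in> M\<close> M_carrier M_mult_closed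
      by blast
  qed
qed

lemma Div_subset_M: "Div G M g \<subseteq> M"
  by (auto simp: DivL_def)

lemma balanced_in_Div: "balanced G M g \<Longrightarrow> g \<in> Div G M g"
  using M_carrier leL_refl by (auto simp: balanced_def DivL_def)

lemma balanced_left_complement:
  assumes "balanced G M g" "s \<in> Div G M g"
  shows "inv s \<otimes> g \<in> Div G M g"
proof -
  have "g \<in> M" "s \<in> M" "inv s \<otimes> g \<in> M"
    using assms by (auto simp: balanced_def DivL_def leL_def)
  moreover from this have "g \<otimes> inv (inv s \<otimes> g) = s"
    using M_carrier by (simp add: inv_mult_group m_assoc)
  ultimately have "inv s \<otimes> g \<in> DivR G M g"
    by (simp add: DivR_def leR_def)
  then show ?thesis using assms(1) by (simp add: balanced_def)
qed

lemma balanced_right_complement: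
  assumes "balanced G M g" "s \<in> Div G M g"
  shows "g \<otimes> inv s \<in> Div G M g"
proof -
  have "s \<in> DivR G M g" using assms by (simp add: balanced_def)
  then have "g \<in> M" "s \<in> M" "g \<otimes> inv s \<in> M"
    using assms by (auto simp: balanced_def DivR_def leR_def)
  moreover from this have "inv (g \<otimes> inv s) \<otimes> g = s"
    using M_carrier by (simp add: inv_mult_group m_assoc)
  ultimately show ?thesis
    by (simp add: DivL_def leL_def)
qed

lemma balanced_conj_Div:
  assumes "balanced G M g" "s \<in> Div G M g"
  shows "inv g \<otimes> s \<otimes> g \<in> Div G M g"
proof -
  have "g \<in> carrier G" "s \<in> carrier G"
    using assms M_carrier by (auto simp: balanced_def DivL_def)
  then have "inv (inv s \<otimes> g) \<otimes> g = inv g \<otimes> s \<otimes> g"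
    by (simp add: inv_mult_group)
  then show ?thesis
    using balanced_left_complement[OF assms(1)] assms by metis
qed

lemma balanced_conj_inv_Div:
  assumes "balanced G M g" "s \<in> Div G M g"
  shows "g \<otimes> s \<otimes> inv g \<in> Div G M g"
proof -
  have "g \<in> carrier G" "s \<in> carrier G"
    using assms M_carrier by (auto simp: balanced_def DivL_def)
  then have "g \<otimes> inv (g \<otimes> inv s) = g \<otimes> s \<otimes> inv g"
    by (simp add: inv_mult_group m_assoc)
  then show ?thesis
    using balanced_right_complement[OF assms(1)] assms by metis
qed

lemma noetherian_induct [consumes 2, case_names step]:
  assumes "noetherian G M" "e \<in> M"
    and step: "\<And>e. e \<in> M \<Longrightarrow>
      (\<And>s f. s \<in> M \<Longrightarrow> s \<noteq> \<one> \<Longrightarrow> f \<in> M \<Longrightarrow> e = s \<otimes> f \<Longrightarrow> P f) \<Longrightarrow> P e"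
  shows "P e"
proof -
  define bounded where "bounded n e \<longleftrightarrow> (\<forall>xs. set xs \<subseteq> M - {\<one>} \<and>
    foldr (\<lambda>x y. x \<otimes> y) xs \<one> = e \<longrightarrow> length xs \<le> n)" for n e
  have "P e" if "e \<in> M" "bounded n e" for n e
    using that
  proof (induction n arbitrary: e rule: less_induct)
    case (less n e)
    show ?case
    proof (rule step[OF less.prems(1)])
      fix s f assume s: "s \<in> M" "s \<noteq> \<one>" and f: "f \<in> M" and e: "e = s \<otimes> f"
      have shorter: "length xs < n"
        if "set xs \<subseteq> M - {\<one>}" "foldr (\<lambda>x y. x \<otimes> y) xs \<one> = f" for xs
      proof -
        have "set (s # xs) \<subseteq> M - {\<one>}" "foldr (\<lambda>x y. x \<otimes> y) (s # xs) \<one> = e"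
          using that s e by auto
        then have "length (s # xs) \<le> n"
          using less.prems(2) unfolding bounded_def by blast
        then show ?thesis by simp
      qed
      obtain xs where "set xs \<subseteq> M - {\<one>}" "foldr (\<lambda>x y. x \<otimes> y) xs \<one> = f"
        using f M_carrier
        by (cases "f = \<one>") (fastforce intro: that[of "[]"], fastforce intro: that[of "[f]"])
      then have "n - 1 < n" "bounded (n - 1) f"
        using shorter unfolding bounded_def by fastforce+
      then show "P f" using less.IH f by blast
    qed
  qed
  moreover obtain n where "bounded n e"
    using assms(1,2) unfolding noetherian_def bounded_def by blast
  ultimately show ?thesis using assms(2) by blast
qed

end

locale lattice_order = pointed_order +
  assumes lattice: "leL_lattice G M"
begin

lemma meetL_characterization:
  assumes "x \<in> carrier G" "y \<in> carrier G"
  shows "meetL G M x y \<in> carrier G \<and> meetL G M x y \<preceq> x \<and> meetL G M x y \<preceq> y \<and>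
    (\<forall>e\<in>carrier G. e \<preceq> x \<and> e \<preceq> y \<longrightarrow> e \<preceq> meetL G M x y)"
  unfolding meetL_def
proof (rule theI')
  show "\<exists>!m. m \<in> carrier G \<and> m \<preceq> x \<and> m \<preceq> y \<and> (\<forall>e\<in>carrier G. e \<preceq> x \<and> e \<preceq> y \<longrightarrow> e \<preceq> m)"
  proof -
    obtain m where m: "m \<in> carrier G" "m \<preceq> x" "m \<preceq> y"
      "\<forall>e\<in>carrier G. e \<preceq> x \<and> e \<preceq> y \<longrightarrow> e \<preceq> m"
      using lattice assms unfolding leL_lattice_def by blast
    then show ?thesis using leL_antisym by blast
  qed
qed

lemma meetL_closed: "x \<in> carrier G \<Longrightarrow> y \<in> carrier G \<Longrightarrow> meetL G M x y \<in> carrier G"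
  using meetL_characterization by blast

lemma meetL_lower1: "x \<in> carrier G \<Longrightarrow> y \<in> carrier G \<Longrightarrow> meetL G M x y \<preceq> x"
  using meetL_characterization by blast

lemma meetL_lower2: "x \<in> carrier G \<Longrightarrow> y \<in> carrier G \<Longrightarrow> meetL G M x y \<preceq> y"
  using meetL_characterization by blast

lemma meetL_greatest:
  "x \<in> carrier G \<Longrightarrow> y \<in> carrier G \<Longrightarrow> e \<in> carrier G \<Longrightarrow> e \<preceq> x \<Longrightarrow> e \<preceq> y
    \<Longrightarrow> e \<preceq> meetL G M x y"
  using meetL_characterization by blast

lemma meetL_commute: "meetL G M x y = meetL G M y x"
  unfolding meetL_def by (rule arg_cong[where f = The]) (auto simp: fun_eq_iff)

lemma meetL_in_M: "x \<in> M \<Longrightarrow> y \<in> M \<Longrightarrow> meetL G M x y \<in> M"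
  using meetL_greatest[of x y \<one>] meetL_closed one_leL_iff M_carrier by simp

lemma meetL_eq_one_imp:
  assumes "meetL G M x y = \<one>" "x \<in> carrier G" "y \<in> carrier G"
    and "e \<in> M" "e \<preceq> x" "e \<preceq> y"
  shows "e = \<one>"
  using meetL_greatest[of x y e] assms leL_one_imp_eq M_carrier by simp

lemma meetL_mult_left:
  assumes "g \<in> carrier G" "x \<in> carrier G" "y \<in> carrier G"
  shows "meetL G M (g \<otimes> x) (g \<otimes> y) = g \<otimes> meetL G M x y"
proof (rule leL_antisym)
  define m where "m = meetL G M (g \<otimes> x) (g \<otimes> y)"
  define m' where "m' = meetL G M x y"
  have mc: "m \<in> carrier G" and m'c: "m' \<in> carrier G" and mg: "m = g \<otimes> (inv g \<otimes> m)"
    using assms meetL_closed by (simp_all add: m_def m'_def)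
  have "g \<otimes> (inv g \<otimes> m) \<preceq> g \<otimes> x" "g \<otimes> (inv g \<otimes> m) \<preceq> g \<otimes> y"
    using assms meetL_lower1 meetL_lower2 mg by (simp_all add: m_def)
  then have "inv g \<otimes> m \<preceq> x" "inv g \<otimes> m \<preceq> y"
    using assms mc leL_mult_left_cancel[of g "inv g \<otimes> m"] by simp_all
  then have "inv g \<otimes> m \<preceq> m'"
    using assms mc meetL_greatest by (simp add: m'_def)
  then show "m \<preceq> g \<otimes> m'"
    using assms mc m'c mg leL_mult_left_cancel[of g "inv g \<otimes> m" m'] by simp
  have "g \<otimes> m' \<preceq> g \<otimes> x" "g \<otimes> m' \<preceq> g \<otimes> y"
    using assms m'c meetL_lower1 meetL_lower2 leL_mult_left_cancel by (simp_all add: m'_def)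
  then show "g \<otimes> m' \<preceq> m"
    using assms m'c meetL_greatest by (simp add: m_def)
qed (use assms meetL_closed in auto)

lemma joinL_exists:
  assumes "x \<in> carrier G" "y \<in> carrier G"
  obtains j where "j \<in> carrier G" "x \<preceq> j" "y \<preceq> j"
    "\<And>u. u \<in> carrier G \<Longrightarrow> x \<preceq> u \<Longrightarrow> y \<preceq> u \<Longrightarrow> j \<preceq> u"
proof -
  have "\<exists>j\<in>carrier G. x \<preceq> j \<and> y \<preceq> j \<and> (\<forall>u\<in>carrier G. x \<preceq> u \<and> y \<preceq> u \<longrightarrow> j \<preceq> u)"
    using lattice[unfolded leL_lattice_def, rule_format, OF assms] by (rule conjunct2)
  then show ?thesis using that by blast
qed

end

locale parabolic = lattice_order +
  fixes \<Delta> \<delta> :: 'a and N :: "'a set"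
  assumes Delta_balanced: "balanced G M \<Delta>"
    and M_noetherian: "noetherian G M"
    and M_generated: "mon_gen G (Div G M \<Delta>) = M"
    and delta_balanced: "balanced G M \<delta>"
    and N_def: "N = mon_gen G (Div G M \<delta>)"
    and Div_delta: "Div G M \<delta> = Div G M \<Delta> \<inter> N"
begin

lemma Delta_carrier: "\<Delta> \<in> carrier G"
  using Delta_balanced M_carrier by (simp add: balanced_def)

lemma delta_in_M: "\<delta> \<in> M"
  using delta_balanced by (simp add: balanced_def)

lemma delta_carrier: "\<delta> \<in> carrier G"
  using delta_in_M M_carrier by simp

lemma N_subset_M: "N \<subseteq> M"
  using mon_gen_subset[OF Div_subset_M] N_def by simp

lemma N_carrier: "x \<in> N \<Longrightarrow> x \<in> carrier G"
  using N_subset_M M_carrier by blast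

lemma one_in_N: "\<one> \<in> N"
  by (simp add: N_def mon_gen.one)

lemma N_mult_closed: "x \<in> N \<Longrightarrow> y \<in> N \<Longrightarrow> x \<otimes> y \<in> N"
  by (simp add: N_def mon_gen.mult)

lemma Div_delta_subset_N: "Div G M \<delta> \<subseteq> N"
  by (auto simp: N_def mon_gen.incl)

lemma delta_in_Div_Delta: "\<delta> \<in> Div G M \<Delta>"
  using balanced_in_Div[OF delta_balanced] Div_delta by blast

lemma delta_pow_in_N: "\<delta> [^] (k::nat) \<in> N"
  using balanced_in_Div[OF delta_balanced] Div_delta_subset_N
  by (induction k) (auto simp: one_in_N N_mult_closed)

lemma delta_pow_carrier: "\<delta> [^] (k::nat) \<in> carrier G"
  using delta_pow_in_N N_carrier by blast

lemma Delta_pow_in_M: "\<Delta> [^] (k::nat) \<in> M"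
  using Delta_balanced
  by (induction k) (auto simp: balanced_def M_mult_closed)

lemma conj_Delta_in_M: "x \<in> M \<Longrightarrow> inv \<Delta> \<otimes> x \<otimes> \<Delta> \<in> M"
  using mon_gen_conj_closed[OF Div_subset_M Delta_carrier]
    balanced_conj_Div[OF Delta_balanced] mon_gen.incl M_generated
  by metis

lemma conj_delta_pow_in_N:
  assumes "x \<in> N"
  shows "inv (\<delta> [^] (k::nat)) \<otimes> x \<otimes> \<delta> [^] k \<in> N"
proof (rule conj_pow_closed[OF _ delta_carrier _ assms])
  show "N \<subseteq> carrier G" using N_carrier by blast
  show "inv \<delta> \<otimes> y \<otimes> \<delta> \<in> N" if "y \<in> N" for y
    using that mon_gen_conj_closed[OF Div_subset_M delta_carrier]
      balanced_conj_Div[OF delta_balanced] mon_gen.incl N_def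
    by metis
qed

lemma conj_inv_delta_pow_in_N:
  assumes "x \<in> N"
  shows "\<delta> [^] (k::nat) \<otimes> x \<otimes> inv (\<delta> [^] k) \<in> N"
proof -
  have "inv (inv \<delta> [^] k) \<otimes> x \<otimes> inv \<delta> [^] k \<in> N"
  proof (rule conj_pow_closed[OF _ _ _ assms])
    show "N \<subseteq> carrier G" using N_carrier by blast
    show "inv \<delta> \<in> carrier G" using delta_carrier by simp
    show "inv (inv \<delta>) \<otimes> y \<otimes> inv \<delta> \<in> N" if "y \<in> N" for y
      using that mon_gen_conj_closed[OF Div_subset_M, of "inv \<delta>"] delta_carrier
        balanced_conj_inv_Div[OF delta_balanced] mon_gen.incl N_def
      by (metis inv_closed inv_inv)
  qed
  then show ?thesis using delta_carrier by (simp add: nat_pow_inv)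
qed

lemma delta_leL_N_mult_delta: "x \<in> N \<Longrightarrow> \<delta> \<preceq> x \<otimes> \<delta>"
  using conj_delta_pow_in_N[of x 1] N_subset_M N_carrier delta_carrier
  by (auto simp: leL_def m_assoc)

lemma N_complement_delta_pow: "x \<in> N \<Longrightarrow> \<exists>k::nat. inv x \<otimes> \<delta> [^] k \<in> N"
  unfolding N_def
proof (induction rule: mon_gen.induct)
  case one
  show ?case using one_in_N by (intro exI[of _ 0]) (simp add: N_def)
next
  case (incl s)
  then have "inv s \<otimes> \<delta> [^] (1::nat) \<in> N"
    using balanced_left_complement[OF delta_balanced] Div_delta_subset_N delta_carrier by auto
  then show ?case unfolding N_def by blast
next
  case (mult x y)
  then obtain kx ky :: nat where kx: "inv x \<otimes> \<delta> [^] kx \<in> N" and ky: "inv y \<otimes> \<delta> [^] ky \<in> N"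
    unfolding N_def by blast
  have "x \<in> carrier G" "y \<in> carrier G"
    using mult.hyps N_carrier N_def by auto
  then have "inv (x \<otimes> y) \<otimes> \<delta> [^] (kx + ky)
      = (inv y \<otimes> \<delta> [^] ky) \<otimes> (inv (\<delta> [^] ky) \<otimes> (inv x \<otimes> \<delta> [^] kx) \<otimes> \<delta> [^] ky)"
    using delta_carrier by (simp add: m_assoc inv_mult_group nat_pow_mult[symmetric])
  also have "\<dots> \<in> N"
    using N_mult_closed ky conj_delta_pow_in_N[OF kx] by blast
  finally show ?case unfolding N_def by blast
qed

lemma N_leL_delta_pow: "x \<in> N \<Longrightarrow> \<exists>k::nat. x \<preceq> \<delta> [^] k"
  using N_complement_delta_pow N_subset_M by (auto simp: leL_def)

lemma generate_Div_delta_fraction: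
  "h \<in> generate G (Div G M \<delta>) \<Longrightarrow> \<exists>x\<in>N. \<exists>y\<in>N. h = inv x \<otimes> y"
proof (induction rule: generate.induct)
  case one
  show ?case using one_in_N by force
next
  case (incl h)
  then have "h \<in> N" using Div_delta_subset_N by blast
  then show ?case using one_in_N N_carrier by force
next
  case (inv h)
  then have "h \<in> N" using Div_delta_subset_N by blast
  then show ?case using one_in_N N_carrier by force
next
  case (eng h1 h2)
  obtain x1 y1 where 1: "x1 \<in> N" "y1 \<in> N" "h1 = inv x1 \<otimes> y1" using eng.IH(1) by blast
  obtain x2 y2 where 2: "x2 \<in> N" "y2 \<in> N" "h2 = inv x2 \<otimes> y2" using eng.IH(2) by blast
  obtain k :: nat where k: "inv x2 \<otimes> \<delta> [^] k \<in> N" using N_complement_delta_pow 2 by blast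
  define d where "d = \<delta> [^] k"
  have "h1 \<otimes> h2 = inv (d \<otimes> x1) \<otimes> (d \<otimes> (y1 \<otimes> (inv x2 \<otimes> d)) \<otimes> inv d \<otimes> y2)"
    using 1 2 N_carrier delta_pow_carrier by (simp add: d_def m_assoc inv_mult_group)
  moreover have "d \<otimes> x1 \<in> N"
    using 1 delta_pow_in_N N_mult_closed by (simp add: d_def)
  moreover have "d \<otimes> (y1 \<otimes> (inv x2 \<otimes> d)) \<otimes> inv d \<otimes> y2 \<in> N"
    using 1 2 k conj_inv_delta_pow_in_N N_mult_closed by (simp add: d_def)
  ultimately show ?case by blast
qed

lemma Delta_leL_delta_mult_Delta: "\<Delta> \<preceq> \<delta> \<otimes> \<Delta>"
  using conj_Delta_in_M[OF delta_in_M] Delta_carrier delta_carrier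
  by (simp add: leL_def m_assoc)

lemma Div_Delta_leL_delta_pow:
  assumes "s \<in> Div G M \<Delta>" "s \<preceq> \<delta> [^] (k::nat)"
  shows "s \<preceq> \<delta>"
  using assms
proof (induction k arbitrary: s)
  case 0
  then have "s = \<one>" using leL_one_imp_eq by (simp add: DivL_def)
  then show ?case using delta_in_M delta_carrier by (simp add: leL_def)
next
  case (Suc k)
  txt \<open>With \<open>j = s \<or> \<delta>\<close>, the element \<open>\<delta>\<inverse> j\<close> is a divisor of \<open>\<Delta>\<close> below \<open>\<delta>\<^sup>k\<close>, hence
    below \<open>\<delta>\<close> by induction; thus \<open>j \<in> Div \<Delta> \<inter> N = Div \<delta>\<close>.\<close>
  have sM: "s \<in> M" and sDelta: "s \<preceq> \<Delta>" using Suc.prems(1) by (auto simp: DivL_def)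
  have sc: "s \<in> carrier G" using sM M_carrier by simp
  have "\<delta> \<preceq> \<Delta>" using delta_in_Div_Delta by (simp add: DivL_def)
  obtain j where jc: "j \<in> carrier G" and sj: "s \<preceq> j" and delta_j: "\<delta> \<preceq> j"
    and least: "\<And>u. u \<in> carrier G \<Longrightarrow> s \<preceq> u \<Longrightarrow> \<delta> \<preceq> u \<Longrightarrow> j \<preceq> u"
    using joinL_exists[OF sc delta_carrier] by blast
  define t where "t = inv \<delta> \<otimes> j"
  have tc: "t \<in> carrier G" and jt: "j = \<delta> \<otimes> t"
    using jc delta_carrier by (simp_all add: t_def)
  have tM: "t \<in> M" using delta_j by (simp add: leL_def t_def)
  have "j \<preceq> \<delta> \<otimes> \<delta> [^] k"
  proof (rule least)
    show "s \<preceq> \<delta> \<otimes> \<delta> [^] k"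
      using Suc.prems(2) unfolding nat_pow_Suc2[OF delta_carrier] .
    show "\<delta> \<preceq> \<delta> \<otimes> \<delta> [^] k"
      using leL_mult_right delta_carrier delta_pow_in_N N_subset_M by blast
  qed (simp add: delta_carrier delta_pow_carrier)
  then have "t \<preceq> \<delta> [^] k"
    using jt leL_mult_left_cancel delta_carrier tc delta_pow_carrier by simp
  have "s \<preceq> \<delta> \<otimes> \<Delta>"
    using leL_trans[OF sc Delta_carrier _ sDelta Delta_leL_delta_mult_Delta] delta_carrier Delta_carrier
    by simp
  then have "j \<preceq> \<delta> \<otimes> \<Delta>"
    using least delta_carrier Delta_carrier leL_mult_right Delta_balanced
    by (simp add: balanced_def)
  then have "t \<preceq> \<Delta>"
    using jt leL_mult_left_cancel delta_carrier tc Delta_carrier by simp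
  then have "t \<preceq> \<delta>"
    using Suc.IH tM \<open>t \<preceq> \<delta> [^] k\<close> by (simp add: DivL_def)
  then have "j \<in> N"
    using jt tM Div_delta_subset_N balanced_in_Div[OF delta_balanced] N_mult_closed
    by (auto simp: DivL_def)
  moreover have "j \<in> M" "j \<preceq> \<Delta>"
    using jt tM delta_in_M M_mult_closed least Delta_carrier sDelta \<open>\<delta> \<preceq> \<Delta>\<close> by simp_all
  ultimately have "j \<preceq> \<delta>" using Div_delta by (auto simp: DivL_def)
  then show ?case using leL_trans[OF sc jc delta_carrier sj] by simp
qed

lemma leL_delta_pow_cancel_left:
  assumes "g \<in> N" "w \<in> carrier G" "g \<otimes> w \<preceq> \<delta> [^] (k::nat)"
  shows "w \<preceq> \<delta> [^] k"
proof -
  have gc: "g \<in> carrier G" using assms(1) N_carrier by simp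
  have "inv w \<otimes> \<delta> [^] k
      = (inv (g \<otimes> w) \<otimes> \<delta> [^] k) \<otimes> (inv (\<delta> [^] k) \<otimes> g \<otimes> \<delta> [^] k)"
    using gc assms(2) delta_pow_carrier by (simp add: m_assoc inv_mult_group)
  also have "\<dots> \<in> M"
    using assms(3) conj_delta_pow_in_N[OF assms(1)] N_subset_M M_mult_closed
    by (auto simp: leL_def)
  finally show ?thesis by (simp add: leL_def)
qed

lemma leL_delta_pow_imp_in_N:
  assumes "e \<in> M" "e \<preceq> \<delta> [^] (k::nat)"
  shows "e \<in> N"
  using M_noetherian assms
proof (induction rule: noetherian_induct)
  case (step e)
  show ?case
  proof (cases "e = \<one>")
    case True
    then show ?thesis using one_in_N by simp
  next
    case False
    then obtain s where sDelta: "s \<in> Div G M \<Delta>" and s1: "s \<noteq> \<one>" and se: "s \<preceq> e"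
      using mon_gen_generator_leL[OF Div_subset_M] M_generated step.hyps by blast
    have sM: "s \<in> M" using sDelta Div_subset_M by blast
    then have "s \<preceq> \<delta> [^] k"
      using leL_trans[OF _ _ delta_pow_carrier se step.prems] step.hyps M_carrier by simp
    then have sN: "s \<in> N"
      using Div_Delta_leL_delta_pow[OF sDelta] sM Div_delta_subset_N by (auto simp: DivL_def)
    define f where "f = inv s \<otimes> e"
    have fM: "f \<in> M" and ef: "e = s \<otimes> f"
      using se sM step.hyps M_carrier by (simp_all add: leL_def f_def)
    then have "f \<preceq> \<delta> [^] k"
      using leL_delta_pow_cancel_left[OF sN] step.prems M_carrier by simp
    then have "f \<in> N" using step.IH[OF sM s1 fM ef] by blast
    then show ?thesis using ef sN N_mult_closed by simp
  qed
qed

lemma N_cancel_left: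
  assumes "g \<in> N" "w \<in> M" "g \<otimes> w \<in> N"
  shows "w \<in> N"
proof -
  obtain k :: nat where "g \<otimes> w \<preceq> \<delta> [^] k" using N_leL_delta_pow assms(3) by blast
  then have "w \<preceq> \<delta> [^] k"
    using leL_delta_pow_cancel_left[OF assms(1)] assms(2) M_carrier by simp
  then show ?thesis using leL_delta_pow_imp_in_N assms(2) by blast
qed

lemma left_orth_factors_in_N:
  assumes "\<beta> \<in> generate G (Div G M \<delta>)" "b1 \<in> M" "b2 \<in> M"
    and "\<beta> = inv b2 \<otimes> b1" "meetL G M b1 b2 = \<one>"
  shows "b1 \<in> N" "b2 \<in> N"
proof -
  obtain x y where xy: "x \<in> N" "y \<in> N" "\<beta> = inv x \<otimes> y"
    using generate_Div_delta_fraction assms(1) by blast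
  have xc: "x \<in> carrier G" and yc: "y \<in> carrier G" using xy N_carrier by auto
  have bc: "b1 \<in> carrier G" "b2 \<in> carrier G" using assms(2,3) M_carrier by auto
  define g where "g = x \<otimes> inv b2"
  have gc: "g \<in> carrier G" using xc bc by (simp add: g_def)
  have gb2: "g \<otimes> b2 = x" using xc bc by (simp add: g_def m_assoc)
  have gb1: "g \<otimes> b1 = y"
  proof -
    have "g \<otimes> b1 = x \<otimes> \<beta>" using xc bc assms(4) by (simp add: g_def m_assoc)
    then show ?thesis using xy xc yc by simp
  qed
  have "meetL G M x y = g \<otimes> meetL G M b2 b1"
    using meetL_mult_left[OF gc bc(2) bc(1)] gb1 gb2 by simp
  then have "meetL G M x y = g"
    using assms(5) meetL_commute[of b1 b2] gc by simp
  moreover have "x \<in> M" "y \<in> M" using xy N_subset_M by auto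
  ultimately have "g \<in> M" and "g \<preceq> x"
    using meetL_in_M meetL_lower1 xc yc by metis+
  moreover obtain k :: nat where "x \<preceq> \<delta> [^] k" using N_leL_delta_pow xy by blast
  ultimately have "g \<in> N"
    using leL_trans[OF gc xc delta_pow_carrier] leL_delta_pow_imp_in_N by blast
  then show "b2 \<in> N" "b1 \<in> N"
    using N_cancel_left[OF _ assms(3)] N_cancel_left[OF _ assms(2)] gb1 gb2 xy by auto
qed

lemma meetL_orth_mult_right:
  assumes "b1 \<in> N" "b2 \<in> N" "meetL G M b1 b2 = \<one>"
    and "c \<in> M" "meetL G M c \<delta> = \<one>"
  shows "meetL G M b2 (b1 \<otimes> c) = \<one>"
proof (rule ccontr)
  define m where "m = meetL G M b2 (b1 \<otimes> c)"
  assume "m \<noteq> \<one>"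
  have b1c: "b1 \<in> carrier G" and b2c: "b2 \<in> carrier G" and cc: "c \<in> carrier G"
    using assms N_carrier M_carrier by auto
  have b1cc: "b1 \<otimes> c \<in> carrier G" using b1c cc by simp
  have mc: "m \<in> carrier G" and m_b2: "m \<preceq> b2" and m_b1c: "m \<preceq> b1 \<otimes> c"
    using meetL_closed meetL_lower1 meetL_lower2 b2c b1cc by (simp_all add: m_def)
  have "b1 \<in> M" "b2 \<in> M" using assms(1,2) N_subset_M by auto
  then have "m \<in> M"
    using meetL_in_M assms(4) M_mult_closed by (simp add: m_def)
  moreover obtain k :: nat where "b2 \<preceq> \<delta> [^] k" using N_leL_delta_pow assms(2) by blast
  ultimately have "m \<in> N"
    using leL_trans[OF mc b2c delta_pow_carrier m_b2] leL_delta_pow_imp_in_N by blast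
  then obtain s where s_delta: "s \<in> Div G M \<delta>" and "s \<noteq> \<one>" and s_m: "s \<preceq> m"
    using mon_gen_generator_leL[OF Div_subset_M] N_def \<open>m \<noteq> \<one>\<close> by blast
  have sM: "s \<in> M" and "s \<preceq> \<delta>" using s_delta by (auto simp: DivL_def)
  have sc: "s \<in> carrier G" using sM M_carrier by simp
  txt \<open>Left invariance of the meet squeezes \<open>s\<close> below \<open>b1 (c \<and> \<delta>) = b1\<close>.\<close>
  have "s \<preceq> b1 \<otimes> \<delta>"
    using leL_trans[OF sc delta_carrier _ \<open>s \<preceq> \<delta>\<close> delta_leL_N_mult_delta[OF assms(1)]]
      b1c delta_carrier by simp
  moreover have "s \<preceq> b1 \<otimes> c" using leL_trans[OF sc mc b1cc s_m m_b1c] .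
  ultimately have "s \<preceq> meetL G M (b1 \<otimes> c) (b1 \<otimes> \<delta>)"
    using meetL_greatest b1cc b1c delta_carrier sc by simp
  then have "s \<preceq> b1"
    using meetL_mult_left[OF b1c cc delta_carrier] assms(5) b1c by simp
  moreover have "s \<preceq> b2" using leL_trans[OF sc mc b2c s_m m_b2] .
  ultimately have "s = \<one>" using meetL_eq_one_imp[OF assms(3) b1c b2c sM] by simp
  then show False using \<open>s \<noteq> \<one>\<close> by simp
qed

lemma left_orth_form_mult_right:
  assumes "\<beta> \<in> generate G (Div G M \<delta>)" "left_orth_form G M \<beta> b2 b1"
    and "c \<in> M" "meetL G M c \<delta> = \<one>"
  shows "meetL G M b2 (b1 \<otimes> c) = \<one> \<and> left_orth_form G M (\<beta> \<otimes> c) b2 (b1 \<otimes> c)"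
proof -
  have b: "b1 \<in> M" "b2 \<in> M" "\<beta> = inv b2 \<otimes> b1" "meetL G M b1 b2 = \<one>"
    using assms(2) by (simp_all add: left_orth_form_def)
  have "meetL G M b2 (b1 \<otimes> c) = \<one>"
    using meetL_orth_mult_right[OF left_orth_factors_in_N[OF assms(1) b] b(4) assms(3,4)] .
  moreover have "\<beta> \<otimes> c = inv b2 \<otimes> (b1 \<otimes> c)"
    using b assms(3) M_carrier by (simp add: m_assoc)
  ultimately show ?thesis
    using b assms(3) M_mult_closed meetL_commute[of "b1 \<otimes> c" b2] by (simp add: left_orth_form_def)
qed

lemma right_delta_form_exponent_nonneg:
  assumes "c \<in> M" "right_delta_form G M \<Delta> c a p"
  shows "0 \<le> p"
proof (rule ccontr)
  assume "\<not> 0 \<le> p"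
  then have "nat (- p) \<noteq> 0" by simp
  then obtain n where n: "nat (- p) = Suc n" using not0_implies_Suc by blast
  have aM: "a \<in> M" and "\<not> \<Delta> \<preceq> a" and ca: "c = a \<otimes> \<Delta> [^] p"
    using assms(2) by (auto simp: right_delta_form_def unmovable_def)
  have "\<Delta> [^] p = inv (\<Delta> [^] Suc n)"
    using \<open>\<not> 0 \<le> p\<close> n by (simp add: int_pow_def2)
  then have "c = a \<otimes> inv (\<Delta> \<otimes> \<Delta> [^] n)"
    using ca unfolding nat_pow_Suc2[OF Delta_carrier] by simp
  then have "a = c \<otimes> (\<Delta> \<otimes> \<Delta> [^] n)"
    using inv_solve_right[of c a "\<Delta> \<otimes> \<Delta> [^] n"] aM assms(1) M_carrier Delta_carrier
    by simp
  then have "inv \<Delta> \<otimes> a = (inv \<Delta> \<otimes> c \<otimes> \<Delta>) \<otimes> \<Delta> [^] n"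
    using assms(1) M_carrier Delta_carrier by (simp add: m_assoc)
  also have "\<dots> \<in> M"
    using conj_Delta_in_M[OF assms(1)] Delta_pow_in_M M_mult_closed by blast
  finally show False using \<open>\<not> \<Delta> \<preceq> a\<close> by (simp add: leL_def)
qed

lemma HN_reduced_in_M_meetL_delta:
  assumes "c \<in> HN_reduced_set G M \<Delta> \<delta>" "c \<in> M"
  shows "meetL G M c \<delta> = \<one>"
proof -
  obtain a p where form: "right_delta_form G M \<Delta> c a p" and "N_reduced G M \<delta> a"
    and "p = 0 \<or> p < 0"
    using assms(1) unfolding HN_reduced_set_def by blast
  then have "p = 0"
    using right_delta_form_exponent_nonneg[OF assms(2) form] by simp
  then have "c = a"
    using form M_carrier by (simp add: right_delta_form_def unmovable_def)
  then show ?thesis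
    using \<open>N_reduced G M \<delta> a\<close> by (simp add: N_reduced_def)
qed

end

lemma parabolic_if_parabolic_substructure:
  assumes "garside_structure G M \<Delta>" "parabolic_substructure G M \<Delta> H N \<delta>"
  shows "parabolic G M \<Delta> \<delta> N"
proof -
  note garside = assms(1)[unfolded garside_structure_def]
  note sub = assms(2)[unfolded parabolic_substructure_def]
  have "{x \<in> M. inv\<^bsub>G\<^esub> x \<in> M} = {\<one>\<^bsub>G\<^esub>}" using garside by (elim conjE)
  then have pointed: "x \<in> M \<Longrightarrow> inv\<^bsub>G\<^esub> x \<in> M \<Longrightarrow> x = \<one>\<^bsub>G\<^esub>" for x by blast
  show ?thesis
  proof (intro parabolic.intro lattice_order.intro pointed_order.intro parabolic_axioms.intro
      lattice_order_axioms.intro pointed_order_axioms.intro)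
    show "x = \<one>\<^bsub>G\<^esub>" if "x \<in> M" "inv\<^bsub>G\<^esub> x \<in> M" for x
      using pointed that .
  qed (insert garside sub, blast+)
qed

theorem lemma3p8:
  fixes G :: "('a, 'b) monoid_scheme" and M H N :: "'a set" and \<Delta> \<delta> c \<beta> b1 b2 :: 'a
  assumes "garside_structure G M \<Delta>"
    and "parabolic_substructure G M \<Delta> H N \<delta>"
    and "c \<in> HN_reduced_set G M \<Delta> \<delta> \<inter> M"
    and "\<beta> \<in> H"
    and "left_orth_form G M \<beta> b2 b1"
  shows "meetL G M b2 (b1 \<otimes>\<^bsub>G\<^esub> c) = \<one>\<^bsub>G\<^esub> \<and>
         left_orth_form G M (\<beta> \<otimes>\<^bsub>G\<^esub> c) b2 (b1 \<otimes>\<^bsub>G\<^esub> c)"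
proof -
  interpret parabolic G M \<Delta> \<delta> N
    using assms(1,2) by (rule parabolic_if_parabolic_substructure)
  have "\<beta> \<in> generate G (Div G M \<delta>)"
    using assms(2,4) unfolding parabolic_substructure_def by blast
  moreover have "c \<in> M" "meetL G M c \<delta> = \<one>\<^bsub>G\<^esub>"
    using assms(3) HN_reduced_in_M_meetL_delta by simp_all
  ultimately show ?thesis
    using left_orth_form_mult_right assms(5) by blast
qed

end
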